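(* A topological space $X$ is openly irresolvable if and only if the formula $\Diamond^*(\Box^*\varphi\lor\Box^*\neg\varphi)$ is $d$-valid in $X$ for every modal formula $\varphi$.
   Context: $\Diamond^*\psi$ abbreviates $\psi\lor\Diamond\psi$ and $\Box^*\psi$ abbreviates $\psi\land\Box\psi$. $d$-semantics: a model on a space $X$ is a valuation of propositional variables by subsets of $X$; truth sets $\mathcal{M}_d(\varphi)$ interpret Boolean connectives as set operations, $\mathcal{M}_d(\Diamond\varphi)=\mathrm{d}_X(\mathcal{M}_d(\varphi))$ where $\mathrm{d}_XY$ is the set of limit points of $Y$ ($x$ such that every $O-\{x\}$, $O$ an open neighbourhood of $x$, meets $Y$), and $\Box=\neg\Diamond\neg$. A formula is $d$-valid in $X$ if its truth set is $X$ in every model on $X$. A space is resolvable if it has two disjoint non-empty dense subsets, irresolvable otherwise; $X$ is openly irresolvable if every non-empty open subspace of $X$ is irresolvable. *)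

theory Defs
  imports "HOL-Analysis.Analysis"
begin

datatype fm = Var nat | Bot | Neg fm | Conj fm fm | Disj fm fm | Dia fm

definition Box :: "fm \<Rightarrow> fm" where
  "Box \<phi> = Neg (Dia (Neg \<phi>))"

definition DiaStar :: "fm \<Rightarrow> fm" where
  "DiaStar \<psi> = Disj \<psi> (Dia \<psi>)"

definition BoxStar :: "fm \<Rightarrow> fm" where
  "BoxStar \<psi> = Conj \<psi> (Box \<psi>)"

primrec dtruth :: "'a topology \<Rightarrow> (nat \<Rightarrow> 'a set) \<Rightarrow> fm \<Rightarrow> 'a set" where
  "dtruth X V (Var p) = V p \<inter> topspace X"
| "dtruth X V Bot = {}"
| "dtruth X V (Neg \<phi>) = topspace X - dtruth X V \<phi>"
| "dtruth X V (Conj \<phi> \<psi>) = dtruth X V \<phi> \<inter> dtruth X V \<psi>"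
| "dtruth X V (Disj \<phi> \<psi>) = dtruth X V \<phi> \<union> dtruth X V \<psi>"
| "dtruth X V (Dia \<phi>) = X derived_set_of (dtruth X V \<phi>)"

definition d_valid :: "'a topology \<Rightarrow> fm \<Rightarrow> bool" where
  "d_valid X \<phi> \<longleftrightarrow> (\<forall>V. (\<forall>p. V p \<subseteq> topspace X) \<longrightarrow> dtruth X V \<phi> = topspace X)"

definition resolvable :: "'a topology \<Rightarrow> bool" where
  "resolvable X \<longleftrightarrow> (\<exists>A B. A \<subseteq> topspace X \<and> B \<subseteq> topspace X \<and> A \<inter> B = {} \<and>
      A \<noteq> {} \<and> B \<noteq> {} \<and> X closure_of A = topspace X \<and> X closure_of B = topspace X)"

definition irresolvable :: "'a topology \<Rightarrow> bool" where
  "irresolvable X \<longleftrightarrow> \<not> resolvable X"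

definition openly_irresolvable :: "'a topology \<Rightarrow> bool" where
  "openly_irresolvable X \<longleftrightarrow>
     (\<forall>U. openin X U \<and> U \<noteq> {} \<longrightarrow> irresolvable (subtopology X U))"

end

theory Submission
  imports Defs
begin

text \<open>Both conditions say that for every \<open>A\<close> the open set
  \<open>int A \<union> int (X - A)\<close>, on which \<open>A\<close> is locally decided, is dense.
  For the formula this is just the d-semantics: \<open>\<Box>\<^sup>*\<close> and \<open>\<Diamond>\<^sup>*\<close> are interior
  and closure. For open irresolvability, a non-empty open \<open>U\<close> missing that set
  is exactly one on which both \<open>A\<close> and its complement are dense, i.e. one
  whose subspace is resolvable.\<close>

lemma resolvable_iff_dense_complement:
  "resolvable X \<longleftrightarrow> topspace X \<noteq> {} \<and>
     (\<exists>A. X closure_of A = topspace X \<and> X closure_of (topspace X - A) = topspace X)"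
proof
  assume "resolvable X"
  then obtain A B where "A \<subseteq> topspace X" "B \<subseteq> topspace X" "A \<noteq> {}" "A \<inter> B = {}"
    and dense: "X closure_of A = topspace X" "X closure_of B = topspace X"
    unfolding resolvable_def by blast
  then have "B \<subseteq> topspace X - A"
    by blast
  then have "X closure_of (topspace X - A) = topspace X"
    using closure_of_mono[of B "topspace X - A" X] dense(2) closure_of_subset_topspace
    by (metis subset_antisym)
  with dense(1) \<open>A \<subseteq> topspace X\<close> \<open>A \<noteq> {}\<close> show "topspace X \<noteq> {} \<and>
     (\<exists>A. X closure_of A = topspace X \<and> X closure_of (topspace X - A) = topspace X)"
    by blast
next
  assume "topspace X \<noteq> {} \<and>
     (\<exists>A. X closure_of A = topspace X \<and> X closure_of (topspace X - A) = topspace X)"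
  then obtain A where "topspace X \<noteq> {}"
    and dense: "X closure_of (topspace X \<inter> A) = topspace X" "X closure_of (topspace X - A) = topspace X"
    using closure_of_restrict by metis
  then have "topspace X \<inter> A \<noteq> {}" "topspace X - A \<noteq> {}"
    by (metis closure_of_empty)+
  with dense show "resolvable X"
    unfolding resolvable_def
    by (intro exI[of _ "topspace X \<inter> A"] exI[of _ "topspace X - A"] conjI) auto
qed

lemma resolvable_open_subtopology_iff:
  assumes U: "openin X U" and "U \<noteq> {}"
  shows "resolvable (subtopology X U) \<longleftrightarrow>
           (\<exists>A. U \<inter> (X interior_of A \<union> X interior_of (topspace X - A)) = {})"
proof -
  have U_sub: "U \<subseteq> topspace X"
    using U openin_subset by blast
  have top_sub: "topspace (subtopology X U) = U"
    using U_sub by auto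
  have dense_sub: "subtopology X U closure_of S = U \<longleftrightarrow> U \<subseteq> X closure_of S" for S
    by (auto simp: closure_of_subtopology_open[OF disjI1[OF U]])
  have dense_iff: "U \<subseteq> X closure_of S \<longleftrightarrow> U \<inter> X interior_of (topspace X - S) = {}" for S
    using U_sub by (auto simp: closure_of_interior_of)
  have restrict: "U \<inter> (topspace X - A) = U - A" for A
    using U_sub by blast
  have "U \<inter> X closure_of (topspace X - A) = U \<inter> X closure_of (U - A)" for A
    using openin_Int_closure_of_eq[OF U, of "topspace X - A"] by (simp only: restrict)
  then have local_complement:
    "U \<subseteq> X closure_of (U - A) \<longleftrightarrow> U \<subseteq> X closure_of (topspace X - A)" for A
    by (metis le_iff_inf)
  have "resolvable (subtopology X U) \<longleftrightarrow>
      (\<exists>A. U \<subseteq> X closure_of A \<and> U \<subseteq> X closure_of (topspace X - A))"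
    unfolding resolvable_iff_dense_complement top_sub dense_sub local_complement
    using assms(2) by simp
  also have "\<dots> \<longleftrightarrow> (\<exists>A. U \<inter> X interior_of (topspace X - A) = {} \<and>
                         U \<inter> X interior_of (topspace X - (topspace X - A)) = {})"
    by (simp only: dense_iff)
  also have "\<dots> \<longleftrightarrow> (\<exists>A. U \<inter> (X interior_of A \<union> X interior_of (topspace X - A)) = {})"
    by (simp add: Diff_Diff_Int Int_Un_distrib flip: interior_of_restrict) blast
  finally show ?thesis .
qed

lemma openly_irresolvable_iff_dense_interiors:
  "openly_irresolvable X \<longleftrightarrow>
     (\<forall>A. X closure_of (X interior_of A \<union> X interior_of (topspace X - A)) = topspace X)"
proof -
  have "openly_irresolvable X \<longleftrightarrow> (\<forall>U. openin X U \<and> U \<noteq> {} \<longrightarrow>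
          (\<forall>A. (X interior_of A \<union> X interior_of (topspace X - A)) \<inter> U \<noteq> {}))"
    unfolding openly_irresolvable_def irresolvable_def
    by (simp add: resolvable_open_subtopology_iff Int_commute)
  then show ?thesis
    unfolding dense_intersects_open by blast
qed

lemma dtruth_subset_topspace: "dtruth X V \<phi> \<subseteq> topspace X"
  by (induction \<phi>) (auto simp: derived_set_of_subset_topspace)

lemma dtruth_BoxStar: "dtruth X V (BoxStar \<phi>) = X interior_of dtruth X V \<phi>"
  using dtruth_subset_topspace[of X V \<phi>]
  by (auto simp: BoxStar_def Box_def interior_of_closure_of closure_of_alt)

lemma dtruth_DiaStar: "dtruth X V (DiaStar \<phi>) = X closure_of dtruth X V \<phi>"
  using dtruth_subset_topspace[of X V \<phi>]
  by (auto simp: DiaStar_def closure_of_alt)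

lemma dtruth_DiaStar_Disj_BoxStar:
  "dtruth X V (DiaStar (Disj (BoxStar \<phi>) (BoxStar (Neg \<phi>)))) =
     X closure_of (X interior_of dtruth X V \<phi> \<union> X interior_of (topspace X - dtruth X V \<phi>))"
  by (simp only: dtruth_DiaStar dtruth_BoxStar dtruth.simps)

lemma d_valid_DiaStar_Disj_BoxStar_iff_dense_interiors:
  "(\<forall>\<phi>. d_valid X (DiaStar (Disj (BoxStar \<phi>) (BoxStar (Neg \<phi>))))) \<longleftrightarrow>
     (\<forall>A. X closure_of (X interior_of A \<union> X interior_of (topspace X - A)) = topspace X)"
proof (intro iffI allI)
  fix A
  let ?V = "\<lambda>_. topspace X \<inter> A"
  assume "\<forall>\<phi>. d_valid X (DiaStar (Disj (BoxStar \<phi>) (BoxStar (Neg \<phi>))))"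
  then have "dtruth X ?V (DiaStar (Disj (BoxStar (Var 0)) (BoxStar (Neg (Var 0))))) = topspace X"
    unfolding d_valid_def by (metis inf_le1)
  moreover have "dtruth X ?V (Var 0) = topspace X \<inter> A"
    by auto
  moreover have "topspace X - topspace X \<inter> A = topspace X - A"
    by blast
  ultimately show "X closure_of (X interior_of A \<union> X interior_of (topspace X - A)) = topspace X"
    unfolding dtruth_DiaStar_Disj_BoxStar by (simp only: interior_of_restrict[symmetric])
next
  fix \<phi>
  assume "\<forall>A. X closure_of (X interior_of A \<union> X interior_of (topspace X - A)) = topspace X"
  then show "d_valid X (DiaStar (Disj (BoxStar \<phi>) (BoxStar (Neg \<phi>))))"
    unfolding d_valid_def dtruth_DiaStar_Disj_BoxStar by blast
qed

theorem lemma7: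
  fixes X :: "'a topology"
  shows "openly_irresolvable X \<longleftrightarrow>
           (\<forall>\<phi>. d_valid X (DiaStar (Disj (BoxStar \<phi>) (BoxStar (Neg \<phi>)))))"
  by (simp only: openly_irresolvable_iff_dense_interiors
      d_valid_DiaStar_Disj_BoxStar_iff_dense_interiors)

end
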